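(* In any execution of $\mathtt{search}(\mathcal{G},T)$ (defined in the context), let $t$ be a tangle returned by extract-tangles$(Z,\sigma)$ in an iteration whose region $Z$ has priority $p$, $\alpha\equiv p\pmod 2$, and suppose $Z$ is the highest region of player $\alpha$, i.e. no region recorded in $r$ at that moment has a priority of parity $\alpha$. Then $E_T(t)=\emptyset$ (computed in the full game $\mathcal{G}$).
   Context: Parity games: $\mathcal{G}=(V_0,V_1,E,\mathrm{pr})$, $V=V_0\cup V_1$ finite, partitioned into vertices of Even ($0$) and Odd ($1$); $E\subseteq V\times V$ with every vertex having a successor; $\mathrm{pr}:V\to\{0,\dots,d\}$. $E(u)=\{v:(u,v)\in E\}$, $\mathrm{pr}(U)=\max_{u\in U}\mathrm{pr}(u)$, $\mathrm{pr}^{-1}(p)$ the set of vertices of priority $p$, $\overline{\alpha}=1-\alpha$. A cycle is won by $\alpha$ if its highest priority has parity $\alpha$. A strategy of $\alpha$ is a partial function $\sigma$ on $V_\alpha$ with $\sigma(v)\in E(v)$. For $U\subseteq V$, $\mathcal{G}\cap U$ is the subgame with vertices $V\cap U$ and edges $E\cap(U\times U)$, and $\mathcal{G}\setminus U=\mathcal{G}\cap(V\setminus U)$. A $p$-tangle is a nonempty $U\subseteq V$ with $p=\mathrm{pr}(U)$ such that for $\alpha\equiv p\pmod 2$ there is a strategy $\sigma:U\cap V_\alpha\to U$ (witness strategy $\sigma_T(U)$) with $(U,E\cap(\sigma\cup((U\cap V_{\overline{\alpha}})\times U)))$ strongly connected and all its cycles won by $\alpha$ ("won by $\alpha$"). For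 a tangle $t$ won by $\alpha$ in a game with edge set $E$, $E_T(t)=\{v\notin t:\exists u\in t\cap V_{\overline{\alpha}},(u,v)\in E\}$. $T_\alpha$ denotes the tangles of $T$ won by $\alpha$; for a subgame $\mathcal{G}'$, $T\cap\mathcal{G}'$ denotes the tangles of $T$ contained in its vertex set. Tangle attractor: for a game $\mathcal{G}$ with vertices $V$, tangles $T$, player $\alpha$ and $A\subseteq V$, $\mathit{TAttr}^{\mathcal{G},T}_\alpha(A)$ is the least $Z\supseteq A$ containing every $v\in V_\alpha$ with $E(v)\cap Z\neq\emptyset$, every $v\in V_{\overline{\alpha}}$ with $E(v)\subseteq Z$, and every vertex of every $t\in T_\alpha$ with $\emptyset\neq E_T(t)\subseteq Z$ ($E_T$ computed in $\mathcal{G}$). It is computed iteratively together with a strategy $\sigma$ of $\alpha$ (initially empty): when an $\alpha$-vertex is added individually, $\sigma$ maps it to a successor already in $Z$; each $\alpha$-vertex of $A$ gets as $\sigma$-value a successor in $Z$ once one exists; when the vertices of a tangle $t$ are added, $\sigma(u):=\sigma_T(t)(u)$ for every $\alpha$-vertex $u\in t$ not yet in $\mathrm{dom}(\sigma)$. extract-tangles$(Z,\sigma)$, for a subgame $\mathcal{G}'=(V',E')$ with top priority $p$, $\alpha\equiv p$, region $Z\subseteq V'$ and strategy $\sigma$: let $Y_Z$ be the greatest $X\subseteq Z$ such that every $v\in X\cap V_{\overline{\alpha}}$ has $E'(v)\subseteq X$ and every $v\in X\cap V_\alpha$ has $\sigma(v)\in X$; let $H$ be the graph on $Y_Z$ with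 edges $(v,\sigma(v))$ for $v\in Y_Z\cap V_\alpha$ and $(v,w)\in E'$ for $v\in Y_Z\cap V_{\overline{\alpha}}$; return all bottom strongly connected components of $H$ that contain at least one edge of $H$, each with witness strategy $\sigma$ restricted to it. $\mathtt{search}(\mathcal{G},T)$ (with $T$ a set of tangles of $\mathcal{G}$): repeat forever: set $r:=\emptyset$ (a partial function $V\to\mathbb{N}$, the region function) and $Y:=\emptyset$; while $V\setminus\mathrm{dom}(r)\neq\emptyset$: let $\mathcal{G}':=\mathcal{G}\setminus\mathrm{dom}(r)$ with vertex set $V'$, $T':=T\cap\mathcal{G}'$, $p:=\mathrm{pr}(\mathcal{G}')$, $\alpha:=p\bmod 2$; compute $(Z,\sigma):=\mathit{TAttr}^{\mathcal{G}',T'}_\alpha(\mathrm{pr}^{-1}(p)\cap V')$ (the region of priority $p$); let $A:=$ extract-tangles$(Z,\sigma)$; if some $t\in A$ has $E_T(t)=\emptyset$ with $E_T$ computed in the full game $\mathcal{G}$, return $(T\cup Y,t)$; otherwise set $r(v):=p$ for all $v\in Z$ and $Y:=Y\cup A$. After the while-loop, set $T:=T\cup Y$. *)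

theory Defs
  imports Main
begin

definition parity_game :: "'v set \<Rightarrow> 'v set \<Rightarrow> ('v \<times> 'v) set \<Rightarrow> ('v \<Rightarrow> nat) \<Rightarrow> bool" where
  "parity_game V0 V1 E pr \<longleftrightarrow>
     finite (V0 \<union> V1) \<and> V0 \<inter> V1 = {} \<and> E \<subseteq> (V0 \<union> V1) \<times> (V0 \<union> V1) \<and>
     (\<forall>v\<in>V0 \<union> V1. \<exists>w. (v, w) \<in> E)"

text \<open>Vertices of player alpha (0 = Even, 1 = Odd).\<close>
definition owned :: "'v set \<Rightarrow> 'v set \<Rightarrow> nat \<Rightarrow> 'v set" where
  "owned V0 V1 \<alpha> = (if \<alpha> = 0 then V0 else V1)"

definition prio :: "('v \<Rightarrow> nat) \<Rightarrow> 'v set \<Rightarrow> nat" where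
  "prio pr U = Max (pr ` U)"

text \<open>A tangle is a vertex set together with its witness strategy (a partial map).\<close>
type_synonym 'v tangle = "'v set \<times> ('v \<rightharpoonup> 'v)"

definition tangle_graph :: "'v set \<Rightarrow> 'v set \<Rightarrow> ('v \<times> 'v) set \<Rightarrow> ('v \<Rightarrow> nat) \<Rightarrow> 'v set \<Rightarrow> ('v \<rightharpoonup> 'v) \<Rightarrow> ('v \<times> 'v) set" where
  "tangle_graph V0 V1 E pr U \<tau> =
     (let \<alpha> = prio pr U mod 2 in
      {(u, w). u \<in> U \<inter> owned V0 V1 \<alpha> \<and> \<tau> u = Some w \<and> (u, w) \<in> E} \<union>
      {(u, w). (u, w) \<in> E \<and> u \<in> U \<inter> owned V0 V1 (1 - \<alpha>) \<and> w \<in> U})"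

definition is_tangle :: "'v set \<Rightarrow> 'v set \<Rightarrow> ('v \<times> 'v) set \<Rightarrow> ('v \<Rightarrow> nat) \<Rightarrow> 'v tangle \<Rightarrow> bool" where
  "is_tangle V0 V1 E pr t \<longleftrightarrow>
     (case t of (U, \<tau>) \<Rightarrow>
        U \<noteq> {} \<and> U \<subseteq> V0 \<union> V1 \<and>
        (let \<alpha> = prio pr U mod 2; H = tangle_graph V0 V1 E pr U \<tau> in
           dom \<tau> = U \<inter> owned V0 V1 \<alpha> \<and>
           (\<forall>u w. \<tau> u = Some w \<longrightarrow> (u, w) \<in> E \<and> w \<in> U) \<and>
           (\<forall>u\<in>U. \<forall>w\<in>U. (u, w) \<in> H\<^sup>*) \<and>
           (\<forall>xs. xs \<noteq> [] \<and> (\<forall>i<length xs. (xs ! i, xs ! ((i + 1) mod length xs)) \<in> H)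
                 \<longrightarrow> prio pr (set xs) mod 2 = \<alpha>)))"

definition escapes :: "'v set \<Rightarrow> 'v set \<Rightarrow> ('v \<times> 'v) set \<Rightarrow> nat \<Rightarrow> 'v set \<Rightarrow> 'v set" where
  "escapes V0 V1 E \<alpha> U = {v. v \<notin> U \<and> (\<exists>u\<in>U \<inter> owned V0 V1 (1 - \<alpha>). (u, v) \<in> E)}"

text \<open>Tangle attractor, as the (nondeterministic) iterative computation.  While some alpha-vertex of A still lacks a
  strategy value but has a successor in Z, it gets one first ("once one exists").\<close>

definition attr_pending :: "'v set \<Rightarrow> 'v set \<Rightarrow> ('v \<times> 'v) set \<Rightarrow> nat \<Rightarrow> 'v set \<Rightarrow> 'v set \<Rightarrow> ('v \<rightharpoonup> 'v) \<Rightarrow> bool" where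
  "attr_pending V0 V1 E \<alpha> A Z \<sigma> \<longleftrightarrow>
     (\<exists>a\<in>A \<inter> owned V0 V1 \<alpha>. a \<notin> dom \<sigma> \<and> (\<exists>w\<in>Z. (a, w) \<in> E))"

inductive tattr_run :: "'v set \<Rightarrow> 'v set \<Rightarrow> 'v set \<Rightarrow> ('v \<times> 'v) set \<Rightarrow> ('v \<Rightarrow> nat) \<Rightarrow> 'v tangle set
    \<Rightarrow> nat \<Rightarrow> 'v set \<Rightarrow> 'v set \<Rightarrow> ('v \<rightharpoonup> 'v) \<Rightarrow> bool"
  for V0 V1 V E pr T \<alpha> A where
  start: "tattr_run V0 V1 V E pr T \<alpha> A A Map.empty"
| assign: "\<lbrakk>tattr_run V0 V1 V E pr T \<alpha> A Z \<sigma>; a \<in> A \<inter> owned V0 V1 \<alpha>; a \<notin> dom \<sigma>;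
            (a, w) \<in> E; w \<in> Z\<rbrakk>
           \<Longrightarrow> tattr_run V0 V1 V E pr T \<alpha> A Z (\<sigma>(a \<mapsto> w))"
| add_own: "\<lbrakk>tattr_run V0 V1 V E pr T \<alpha> A Z \<sigma>; \<not> attr_pending V0 V1 E \<alpha> A Z \<sigma>;
             v \<in> V \<inter> owned V0 V1 \<alpha>; v \<notin> Z; (v, w) \<in> E; w \<in> Z\<rbrakk>
           \<Longrightarrow> tattr_run V0 V1 V E pr T \<alpha> A (insert v Z) (\<sigma>(v \<mapsto> w))"
| add_opp: "\<lbrakk>tattr_run V0 V1 V E pr T \<alpha> A Z \<sigma>; \<not> attr_pending V0 V1 E \<alpha> A Z \<sigma>;
             v \<in> V \<inter> owned V0 V1 (1 - \<alpha>); v \<notin> Z; \<forall>w. (v, w) \<in> E \<longrightarrow> w \<in> Z\<rbrakk>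
           \<Longrightarrow> tattr_run V0 V1 V E pr T \<alpha> A (insert v Z) \<sigma>"
| add_tangle: "\<lbrakk>tattr_run V0 V1 V E pr T \<alpha> A Z \<sigma>; \<not> attr_pending V0 V1 E \<alpha> A Z \<sigma>;
                (U, \<tau>) \<in> T; prio pr U mod 2 = \<alpha>; \<not> U \<subseteq> Z;
                escapes V0 V1 E \<alpha> U \<noteq> {}; escapes V0 V1 E \<alpha> U \<subseteq> Z\<rbrakk>
           \<Longrightarrow> tattr_run V0 V1 V E pr T \<alpha> A (Z \<union> U)
                 (\<lambda>u. if u \<in> U \<inter> owned V0 V1 \<alpha> \<and> u \<notin> dom \<sigma> then \<tau> u else \<sigma> u)"

definition tattr_result :: "'v set \<Rightarrow> 'v set \<Rightarrow> 'v set \<Rightarrow> ('v \<times> 'v) set \<Rightarrow> ('v \<Rightarrow> nat) \<Rightarrow> 'v tangle set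
    \<Rightarrow> nat \<Rightarrow> 'v set \<Rightarrow> 'v set \<Rightarrow> ('v \<rightharpoonup> 'v) \<Rightarrow> bool" where
  "tattr_result V0 V1 V E pr T \<alpha> A Z \<sigma> \<longleftrightarrow>
     tattr_run V0 V1 V E pr T \<alpha> A Z \<sigma> \<and>
     \<not> attr_pending V0 V1 E \<alpha> A Z \<sigma> \<and>
     (\<forall>v\<in>(V \<inter> owned V0 V1 \<alpha>) - Z. \<forall>w. (v, w) \<in> E \<longrightarrow> w \<notin> Z) \<and>
     (\<forall>v\<in>(V \<inter> owned V0 V1 (1 - \<alpha>)) - Z. \<exists>w. (v, w) \<in> E \<and> w \<notin> Z) \<and>
     (\<forall>(U, \<tau>)\<in>T. prio pr U mod 2 = \<alpha> \<and> escapes V0 V1 E \<alpha> U \<noteq> {} \<and>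
                  escapes V0 V1 E \<alpha> U \<subseteq> Z \<longrightarrow> U \<subseteq> Z)"

definition ext_closed :: "'v set \<Rightarrow> 'v set \<Rightarrow> ('v \<times> 'v) set \<Rightarrow> nat \<Rightarrow> ('v \<rightharpoonup> 'v) \<Rightarrow> 'v set \<Rightarrow> bool" where
  "ext_closed V0 V1 E \<alpha> \<sigma> X \<longleftrightarrow>
     (\<forall>v\<in>X \<inter> owned V0 V1 (1 - \<alpha>). \<forall>w. (v, w) \<in> E \<longrightarrow> w \<in> X) \<and>
     (\<forall>v\<in>X \<inter> owned V0 V1 \<alpha>. \<exists>w. \<sigma> v = Some w \<and> w \<in> X)"

definition ext_core :: "'v set \<Rightarrow> 'v set \<Rightarrow> ('v \<times> 'v) set \<Rightarrow> nat \<Rightarrow> 'v set \<Rightarrow> ('v \<rightharpoonup> 'v) \<Rightarrow> 'v set" where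
  "ext_core V0 V1 E \<alpha> Z \<sigma> = \<Union>{X. X \<subseteq> Z \<and> ext_closed V0 V1 E \<alpha> \<sigma> X}"

definition ext_graph :: "'v set \<Rightarrow> 'v set \<Rightarrow> ('v \<times> 'v) set \<Rightarrow> nat \<Rightarrow> 'v set \<Rightarrow> ('v \<rightharpoonup> 'v) \<Rightarrow> ('v \<times> 'v) set" where
  "ext_graph V0 V1 E \<alpha> Y \<sigma> =
     {(v, w). v \<in> Y \<inter> owned V0 V1 \<alpha> \<and> \<sigma> v = Some w} \<union>
     {(v, w). (v, w) \<in> E \<and> v \<in> Y \<inter> owned V0 V1 (1 - \<alpha>)}"

definition extract_tangles :: "'v set \<Rightarrow> 'v set \<Rightarrow> ('v \<times> 'v) set \<Rightarrow> nat \<Rightarrow> 'v set \<Rightarrow> ('v \<rightharpoonup> 'v) \<Rightarrow> 'v tangle set" where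
  "extract_tangles V0 V1 E \<alpha> Z \<sigma> =
     (let Y = ext_core V0 V1 E \<alpha> Z \<sigma>; H = ext_graph V0 V1 E \<alpha> Y \<sigma> in
      {(C, \<sigma> |` C) | C. \<exists>u\<in>Y. C = {w. (u, w) \<in> H\<^sup>* \<and> (w, u) \<in> H\<^sup>*} \<and>
                           (\<forall>v w. (v, w) \<in> H \<and> v \<in> C \<longrightarrow> w \<in> C) \<and>
                           (\<exists>v w. (v, w) \<in> H \<and> v \<in> C \<and> w \<in> C)})"

text \<open>Reachable states (T, r, Y) of search(G, T0) at the start of an inner-loop iteration
  (or right after the inner loop finished).\<close>
inductive search_reach :: "'v set \<Rightarrow> 'v set \<Rightarrow> ('v \<times> 'v) set \<Rightarrow> ('v \<Rightarrow> nat) \<Rightarrow> 'v tangle set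
    \<Rightarrow> 'v tangle set \<Rightarrow> ('v \<rightharpoonup> nat) \<Rightarrow> 'v tangle set \<Rightarrow> bool"
  for V0 V1 E pr T0 where
  init: "search_reach V0 V1 E pr T0 T0 Map.empty {}"
| iter: "\<lbrakk>search_reach V0 V1 E pr T0 T r Y;
          V' = (V0 \<union> V1) - dom r; V' \<noteq> {};
          p = prio pr V'; \<alpha> = p mod 2;
          tattr_result V0 V1 V' (E \<inter> (V' \<times> V')) pr {t \<in> T. fst t \<subseteq> V'} \<alpha> {v \<in> V'. pr v = p} Z \<sigma>;
          A = extract_tangles V0 V1 (E \<inter> (V' \<times> V')) \<alpha> Z \<sigma>;
          \<forall>t\<in>A. escapes V0 V1 E \<alpha> (fst t) \<noteq> {}\<rbrakk>
         \<Longrightarrow> search_reach V0 V1 E pr T0 T (r ++ (\<lambda>v. if v \<in> Z then Some p else None)) (Y \<union> A)"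
| restart: "\<lbrakk>search_reach V0 V1 E pr T0 T r Y; (V0 \<union> V1) - dom r = {}\<rbrakk>
         \<Longrightarrow> search_reach V0 V1 E pr T0 (T \<union> Y) Map.empty {}"

end

theory Submission
  imports Defs
begin

text \<open>Every region recorded by search is an attractor of its player in the game that remained
  when it was computed, so no vertex of that player still outside all regions has an edge into
  it. The extracted tangle is closed under the opponent's moves inside the current subgame, so an
  escape of the opponent can only lead into an earlier region; if all earlier regions belong to
  the opponent, that region's attractor would have captured the escaping vertex.\<close>

lemma tattr_run_subset:
  assumes "tattr_run V0 V1 V E pr T \<alpha> A Z \<sigma>" "A \<subseteq> V" "\<forall>t\<in>T. fst t \<subseteq> V"
  shows "Z \<subseteq> V"
  using assms by (induction rule: tattr_run.induct) force+

definition regions_attracting :: "'v set \<Rightarrow> 'v set \<Rightarrow> ('v \<times> 'v) set \<Rightarrow> ('v \<rightharpoonup> nat) \<Rightarrow> bool" where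
  "regions_attracting V0 V1 E r \<longleftrightarrow>
     (\<forall>v q u. r v = Some q \<longrightarrow> u \<in> (V0 \<union> V1) - dom r \<longrightarrow> u \<in> owned V0 V1 (q mod 2) \<longrightarrow>
        (u, v) \<notin> E)"

lemma search_reach_regions_attracting:
  assumes "search_reach V0 V1 E pr T0 T r Y"
  shows "regions_attracting V0 V1 E r"
  using assms
proof (induction rule: search_reach.induct)
  case init
  then show ?case by (simp add: regions_attracting_def)
next
  case (iter T r Y V' p \<alpha> Z \<sigma> A)
  let ?r' = "r ++ (\<lambda>v. if v \<in> Z then Some p else None)"
  have Z_sub: "Z \<subseteq> V'"
    using iter.hyps(6) tattr_run_subset unfolding tattr_result_def by fastforce
  have Z_no_entry: "\<forall>u\<in>(V' \<inter> owned V0 V1 \<alpha>) - Z. \<forall>w. (u, w) \<in> E \<inter> (V' \<times> V') \<longrightarrow> w \<notin> Z"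
    using iter.hyps(6) unfolding tattr_result_def by blast
  show ?case
    unfolding regions_attracting_def
  proof (intro allI impI)
    fix v q u
    assume v: "?r' v = Some q" and u: "u \<in> (V0 \<union> V1) - dom ?r'"
      and u_owner: "u \<in> owned V0 V1 (q mod 2)"
    show "(u, v) \<notin> E"
    proof (cases "v \<in> Z")
      case True
      then have "q = p" using v by (simp add: map_add_def)
      moreover have "u \<in> V'" "u \<notin> Z" using u iter.hyps(2) by (auto simp: dom_map_add)
      ultimately show ?thesis using Z_no_entry Z_sub True u_owner iter.hyps(5) by blast
    next
      case False
      then have "r v = Some q" using v by (simp add: map_add_def)
      moreover have "u \<in> (V0 \<union> V1) - dom r" using u by auto
      ultimately show ?thesis using iter.IH u_owner unfolding regions_attracting_def by blast
    qed
  qed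
next
  case (restart T r Y)
  then show ?case by (simp add: regions_attracting_def)
qed

lemma ext_graph_core_closed:
  assumes "(a, b) \<in> (ext_graph V0 V1 E \<alpha> (ext_core V0 V1 E \<alpha> Z \<sigma>) \<sigma>)\<^sup>*"
    and "a \<in> ext_core V0 V1 E \<alpha> Z \<sigma>"
  shows "b \<in> ext_core V0 V1 E \<alpha> Z \<sigma>"
  using assms
proof (induction rule: rtrancl_induct)
  case base
  then show ?case .
next
  case (step b c)
  then obtain X where X: "X \<subseteq> Z" "ext_closed V0 V1 E \<alpha> \<sigma> X" "b \<in> X"
    unfolding ext_core_def by blast
  have "c \<in> X"
    using step.hyps(2) X(2,3) unfolding ext_graph_def ext_closed_def
    by (auto, metis IntI option.inject)
  then show ?case using X(1,2) unfolding ext_core_def by blast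
qed

lemma extract_tangles_subset_core:
  assumes "t \<in> extract_tangles V0 V1 E \<alpha> Z \<sigma>"
  shows "fst t \<subseteq> ext_core V0 V1 E \<alpha> Z \<sigma>"
proof -
  obtain C u where "t = (C, \<sigma> |` C)" "u \<in> ext_core V0 V1 E \<alpha> Z \<sigma>"
    and "C = {w. (u, w) \<in> (ext_graph V0 V1 E \<alpha> (ext_core V0 V1 E \<alpha> Z \<sigma>) \<sigma>)\<^sup>* \<and>
                 (w, u) \<in> (ext_graph V0 V1 E \<alpha> (ext_core V0 V1 E \<alpha> Z \<sigma>) \<sigma>)\<^sup>*}"
    using assms unfolding extract_tangles_def Let_def by blast
  then show ?thesis using ext_graph_core_closed by auto
qed

lemma extract_tangles_escapes_empty:
  assumes "t \<in> extract_tangles V0 V1 E \<alpha> Z \<sigma>"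
  shows "escapes V0 V1 E \<alpha> (fst t) = {}"
proof -
  let ?Y = "ext_core V0 V1 E \<alpha> Z \<sigma>"
  obtain C where C: "t = (C, \<sigma> |` C)"
    and C_bottom: "\<forall>v w. (v, w) \<in> ext_graph V0 V1 E \<alpha> ?Y \<sigma> \<and> v \<in> C \<longrightarrow> w \<in> C"
    using assms unfolding extract_tangles_def Let_def by blast
  have "C \<subseteq> ?Y" using extract_tangles_subset_core[OF assms] C by simp
  then show ?thesis
    using C C_bottom unfolding escapes_def ext_graph_def by auto
qed

theorem lemma8:
  fixes V0 V1 :: "'v set" and E :: "('v \<times> 'v) set" and pr :: "'v \<Rightarrow> nat"
    and T0 T Y :: "'v tangle set" and r :: "'v \<rightharpoonup> nat"
  assumes "parity_game V0 V1 E pr"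
    and "\<forall>t\<in>T0. is_tangle V0 V1 E pr t"
    and "search_reach V0 V1 E pr T0 T r Y"
    and "V' = (V0 \<union> V1) - dom r" and "V' \<noteq> {}"
    and "p = prio pr V'" and "\<alpha> = p mod 2"
    and "tattr_result V0 V1 V' (E \<inter> (V' \<times> V')) pr {t \<in> T. fst t \<subseteq> V'} \<alpha> {v \<in> V'. pr v = p} Z \<sigma>"
    and "t \<in> extract_tangles V0 V1 (E \<inter> (V' \<times> V')) \<alpha> Z \<sigma>"
    and "\<forall>q\<in>ran r. q mod 2 \<noteq> \<alpha>"
  shows "escapes V0 V1 E \<alpha> (fst t) = {}"
proof (rule ccontr)
  assume "escapes V0 V1 E \<alpha> (fst t) \<noteq> {}"
  then obtain u x where u: "u \<in> fst t" "u \<in> owned V0 V1 (1 - \<alpha>)" and x: "x \<notin> fst t" "(u, x) \<in> E"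
    unfolding escapes_def by blast
  have "Z \<subseteq> V'"
    using assms(8) tattr_run_subset unfolding tattr_result_def by fastforce
  moreover have "fst t \<subseteq> Z"
    using extract_tangles_subset_core[OF assms(9)] unfolding ext_core_def by blast
  ultimately have u_V': "u \<in> V'" using u by blast
  have "x \<notin> V'"
    using extract_tangles_escapes_empty[OF assms(9)] u x u_V' unfolding escapes_def by blast
  moreover have "x \<in> V0 \<union> V1" using assms(1) x(2) unfolding parity_game_def by blast
  ultimately obtain q where q: "r x = Some q" using assms(4) by auto
  then have "q mod 2 = 1 - \<alpha>" using assms(7,10) by (auto simp: ran_def)
  then show False
    using search_reach_regions_attracting[OF assms(3)] q u(2) u_V' x(2) assms(4)
    unfolding regions_attracting_def by auto
qed

end
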